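(* Consider NSGA-III (as defined in the context) on an arbitrary $m$-objective function $f:\{0,1\}^n\to\mathbb N_0^m$ with $\varepsilon_{\mathrm{nad}}\ge f_{\max}$, reference set $\mathcal R_p$ with $p\ge 2m^{3/2}f_{\max}$, and population size $\mu\ge|S|$, where $S$ is a maximum-cardinality set of mutually incomparable solutions of $f$ (any initial population, any rule for choosing extreme points). Then in every generation $t$, for every $x\in F^1_t$ there is $x'\in P_{t+1}$ with $f(x')=f(x)$.
   Context: Let $f=(f_1,\dots,f_m):\{0,1\}^n\to\mathbb N_0^m$ be an $m$-objective function to be maximized, and $f_{\max}:=\max\{f_j(x): x\in\{0,1\}^n, j\in[m]\}$, assumed $\ge 1$. For $x,y\in\{0,1\}^n$: $x\succeq y$ ($x$ weakly dominates $y$) iff $f_j(x)\ge f_j(y)$ for all $j$; $x\succ y$ iff $x\succeq y$ and $f_j(x)>f_j(y)$ for some $j$; $x,y$ are incomparable if neither $x\succeq y$ nor $y\succeq x$. A set $S\subseteq\{0,1\}^n$ is a set of mutually incomparable solutions if any two distinct elements are incomparable. For $p\in\mathbb N$ the reference set is $\mathcal R_p=\{(a_1/p,\dots,a_m/p): (a_1,\dots,a_m)\in\mathbb N_0^m,\ \sum_i a_i=p\}$. NSGA-III with population size $\mu$, threshold $\varepsilon_{\mathrm{nad}}>0$ and reference set $\mathcal R_p$: start with a population $P_0$ (a multiset of $\mu$ bit strings; arbitrary), $E_0=\{(-\infty,\dots,-\infty)\}$, $y^{\max}=(-\infty,\dots,-\infty)$, $y^{\min}=(+\infty,\dots,+\infty)$.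 In generation $t=0,1,2,\dots$: (1) Offspring: $Q_t$ consists of $\mu$ offspring, each created independently by choosing a parent uniformly at random from $P_t$ and flipping each of its bits independently with probability $1/n$. (2) Sorting: $R_t=P_t\cup Q_t$ (multiset of size $2\mu$) is partitioned into layers $F^1_t,\dots,F^k_t$, where $F^1_t$ consists of the members of $R_t$ not dominated (w.r.t. $\succ$) by any member of $R_t$, and $F^i_t$ consists of the members of $R_t\setminus(F^1_t\cup\dots\cup F^{i-1}_t)$ not dominated by any member of that set. Let $i^*$ be the index with $\sum_{i<i^*}|F^i_t|<\mu\le\sum_{i\le i^*}|F^i_t|$, and $Y_t=\bigcup_{i<i^*}F^i_t$. (3) Normalization: for each $j$, set $y^{\min}_j\leftarrow\min(y^{\min}_j,\min_{x\in R_t}f_j(x))$ and $y^{\max}_j\leftarrow\max(y^{\max}_j,\max_{x\in F^1_t}f_j(x))$ (so these are running extremes over all generations so far), and choose an extreme point $e^{(j)}\in f(Y_t\cup F^{i^*}_t)\cup E_t$ by some fixed rule (originally via an achievement scalarization function); set $E_{t+1}=\{e^{(1)},\dots,e^{(m)}\}$. If $e^{(1)},\dots,e^{(m)}$ are linearly independent, let $H$ be the affine hyperplane through them; if for every $j$ the hyperplane $H$ meets the $j$-th coordinate axis in exactly one point $I_j u_j$ ($u_j$ the $j$-th unit vector) with $\varepsilon_{\mathrm{nad}}\le I_j\le y^{\max}_j$, set $y^{\mathrm{nad}}_j=I_j$ for all $j$. Otherwise (including linear dependence) set $y^{\mathrm{nad}}_j=\max_{x\in F^1_t}f_j(x)$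 for all $j$. Afterwards, for every $j$ with $y^{\mathrm{nad}}_j<y^{\min}_j+\varepsilon_{\mathrm{nad}}$, reset $y^{\mathrm{nad}}_j=\max_{x\in R_t}f_j(x)$. The normalized objectives are $f^n_j(x)=(f_j(x)-y^{\min}_j)/(y^{\mathrm{nad}}_j-y^{\min}_j)$ (with the convention $f^n_j(x):=0$ if the denominator is $0$), $f^n=(f^n_1,\dots,f^n_m)$. (4) Association: each $x\in Y_t\cup F^{i^*}_t$ is associated with a reference point $\mathrm{rp}(x)\in\mathcal R_p$ minimizing the Euclidean distance from $f^n(x)$ to the line $\{\lambda r:\lambda\in\mathbb R\}$ (equivalently, minimizing the angle between $f^n(x)$ and $r$); ties are broken by a deterministic rule depending only on $f^n(x)$. (5) Selection: let $\rho_r=|\{x\in Y_t:\mathrm{rp}(x)=r\}|$ for $r\in\mathcal R_p$, $\tilde F=\emptyset$, $R'=\mathcal R_p$. Repeat: choose $r\in R'$ with minimal $\rho_r$ (ties uniformly at random); if some $x\in F^{i^*}_t\setminus\tilde F$ has $\mathrm{rp}(x)=r$, add to $\tilde F$ such an $x$ minimizing the distance between $f^n(x)$ and $r$ (ties uniformly at random), increase $\rho_r$ by one, and stop as soon as $|Y_t|+|\tilde F|=\mu$; otherwise remove $r$ from $R'$. Set $P_{t+1}=Y_t\cup\tilde F$. *)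

theory Defs
  imports "HOL-Probability.Probability" "HOL-Library.Multiset"
begin

text \<open>Objectives are indexed by a finite type 'm (so m = CARD('m)); bit strings of
  length n are boolean lists of length n.\<close>

definition wdom :: "('a \<Rightarrow> 'm \<Rightarrow> nat) \<Rightarrow> 'a \<Rightarrow> 'a \<Rightarrow> bool" where
  "wdom f x y \<longleftrightarrow> (\<forall>j. f x j \<ge> f y j)"

definition sdom :: "('a \<Rightarrow> 'm \<Rightarrow> nat) \<Rightarrow> 'a \<Rightarrow> 'a \<Rightarrow> bool" where
  "sdom f x y \<longleftrightarrow> wdom f x y \<and> (\<exists>j. f x j > f y j)"

definition incomparable :: "('a \<Rightarrow> 'm \<Rightarrow> nat) \<Rightarrow> 'a \<Rightarrow> 'a \<Rightarrow> bool" where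
  "incomparable f x y \<longleftrightarrow> \<not> wdom f x y \<and> \<not> wdom f y x"

definition mutually_incomparable :: "('a \<Rightarrow> 'm \<Rightarrow> nat) \<Rightarrow> 'a set \<Rightarrow> bool" where
  "mutually_incomparable f S \<longleftrightarrow> (\<forall>x\<in>S. \<forall>y\<in>S. x \<noteq> y \<longrightarrow> incomparable f x y)"

definition max_incomparable_set :: "(bool list \<Rightarrow> 'm \<Rightarrow> nat) \<Rightarrow> nat \<Rightarrow> bool list set \<Rightarrow> bool" where
  "max_incomparable_set f n S \<longleftrightarrow>
     S \<subseteq> {x. length x = n} \<and> mutually_incomparable f S \<and>
     (\<forall>T. T \<subseteq> {x. length x = n} \<and> mutually_incomparable f T \<longrightarrow> card T \<le> card S)"

definition fmax :: "(bool list \<Rightarrow> 'm::finite \<Rightarrow> nat) \<Rightarrow> nat \<Rightarrow> nat" where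
  "fmax f n = Max {f x j | x j. length x = n}"

definition refset :: "nat \<Rightarrow> (real^'m::finite) set" where
  "refset p = {(\<chi> i. real (a i) / real p) | a. (\<Sum>i\<in>UNIV. a i) = p}"

section \<open>Offspring generation (support of the random process)\<close>

primrec mutate :: "nat \<Rightarrow> bool list \<Rightarrow> bool list pmf" where
  "mutate n [] = return_pmf []"
| "mutate n (b # bs) = bind_pmf (bernoulli_pmf (1 / real n))
      (\<lambda>c. map_pmf (\<lambda>r. (b \<noteq> c) # r) (mutate n bs))"

text \<open>Possible offspring multisets: mu offspring, each in the support of
  "pick a parent uniformly from P, then mutate" (independence makes every such
  combination possible).\<close>
definition offspring_ok :: "nat \<Rightarrow> nat \<Rightarrow> bool list multiset \<Rightarrow> bool list multiset \<Rightarrow> bool" where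
  "offspring_ok n \<mu> P Q \<longleftrightarrow> size Q = \<mu> \<and> (\<forall>y\<in>#Q. \<exists>x\<in>#P. y \<in> set_pmf (mutate n x))"

section \<open>Non-dominated sorting (layers are 0-indexed: front f R 0 = F^1)\<close>

definition nd :: "('a \<Rightarrow> 'm \<Rightarrow> nat) \<Rightarrow> 'a multiset \<Rightarrow> 'a multiset" where
  "nd f R = filter_mset (\<lambda>x. \<not> (\<exists>y\<in>#R. sdom f y x)) R"

primrec rest :: "('a \<Rightarrow> 'm \<Rightarrow> nat) \<Rightarrow> 'a multiset \<Rightarrow> nat \<Rightarrow> 'a multiset" where
  "rest f R 0 = R"
| "rest f R (Suc k) = rest f R k - nd f (rest f R k)"

definition front :: "('a \<Rightarrow> 'm \<Rightarrow> nat) \<Rightarrow> 'a multiset \<Rightarrow> nat \<Rightarrow> 'a multiset" where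
  "front f R k = nd f (rest f R k)"

text \<open>critical layer index (0-indexed i^* - 1): least k with |F_0|+...+|F_k| >= mu\<close>
definition istar :: "('a \<Rightarrow> 'm \<Rightarrow> nat) \<Rightarrow> 'a multiset \<Rightarrow> nat \<Rightarrow> nat" where
  "istar f R \<mu> = (LEAST k. size (R - rest f R (Suc k)) \<ge> \<mu>)"

definition fvec :: "(bool list \<Rightarrow> 'm::finite \<Rightarrow> nat) \<Rightarrow> bool list \<Rightarrow> real^'m" where
  "fvec f x = (\<chi> j. real (f x j))"

definition intercept :: "(real^'m::finite) set \<Rightarrow> 'm \<Rightarrow> real" where
  "intercept H j = (THE l. l *\<^sub>R axis j (1::real) \<in> H)"

text \<open>Extreme points are given as options; None stands for the dummy point
  (-inf,...,-inf) of E_0. If any chosen extreme point is the dummy point, the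
  hyperplane construction fails.\<close>
definition hyp_ok :: "real \<Rightarrow> ('m::finite \<Rightarrow> real) \<Rightarrow> ('m \<Rightarrow> (real^'m) option) \<Rightarrow> bool" where
  "hyp_ok eps ymax e \<longleftrightarrow>
     (\<forall>j. e j \<noteq> None) \<and>
     inj (\<lambda>j. the (e j)) \<and> independent (range (\<lambda>j. the (e j))) \<and>
     (\<forall>j. \<exists>!l. l *\<^sub>R axis j (1::real) \<in> affine hull (range (\<lambda>j. the (e j)))) \<and>
     (\<forall>j. eps \<le> intercept (affine hull (range (\<lambda>j. the (e j)))) j \<and>
          intercept (affine hull (range (\<lambda>j. the (e j)))) j \<le> ymax j)"

definition nadir0 :: "(bool list \<Rightarrow> 'm::finite \<Rightarrow> nat) \<Rightarrow> real \<Rightarrow> ('m \<Rightarrow> real) \<Rightarrow>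
    ('m \<Rightarrow> (real^'m) option) \<Rightarrow> bool list multiset \<Rightarrow> 'm \<Rightarrow> real" where
  "nadir0 f eps ymax e F1 j =
     (if hyp_ok eps ymax e then intercept (affine hull (range (\<lambda>j. the (e j)))) j
      else real (Max ((\<lambda>x. f x j) ` set_mset F1)))"

definition nadir :: "(bool list \<Rightarrow> 'm::finite \<Rightarrow> nat) \<Rightarrow> real \<Rightarrow> ('m \<Rightarrow> real) \<Rightarrow> ('m \<Rightarrow> real) \<Rightarrow>
    ('m \<Rightarrow> (real^'m) option) \<Rightarrow> bool list multiset \<Rightarrow> bool list multiset \<Rightarrow> 'm \<Rightarrow> real" where
  "nadir f eps ymin ymax e F1 R j =
     (if nadir0 f eps ymax e F1 j < ymin j + eps
      then real (Max ((\<lambda>x. f x j) ` set_mset R))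
      else nadir0 f eps ymax e F1 j)"

text \<open>Normalized objective vector (division by 0 yields 0 in Isabelle, matching the
  convention).\<close>
definition normf :: "(bool list \<Rightarrow> 'm::finite \<Rightarrow> nat) \<Rightarrow> ('m \<Rightarrow> real) \<Rightarrow> ('m \<Rightarrow> real) \<Rightarrow>
    bool list \<Rightarrow> real^'m" where
  "normf f ymin ynad x = (\<chi> j. (real (f x j) - ymin j) / (ynad j - ymin j))"

definition assoc_rule :: "nat \<Rightarrow> (real^'m::finite \<Rightarrow> real^'m) \<Rightarrow> bool" where
  "assoc_rule p A \<longleftrightarrow> (\<forall>v. A v \<in> refset p \<and>
      (\<forall>r\<in>refset p. infdist v (span {A v}) \<le> infdist v (span {r})))"

section \<open>Selection (all possible outcomes of the randomized niching loop)\<close>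

inductive sel_reach :: "(real^'m::finite) set \<Rightarrow> (bool list \<Rightarrow> real^'m) \<Rightarrow> (bool list \<Rightarrow> real^'m) \<Rightarrow>
    bool list multiset \<Rightarrow> bool list multiset \<Rightarrow> nat \<Rightarrow>
    ((real^'m \<Rightarrow> nat) \<times> bool list multiset \<times> (real^'m) set) \<Rightarrow> bool"
  for Rp rp nv Fi Y \<mu> where
  init: "sel_reach Rp rp nv Fi Y \<mu> (\<lambda>r. size (filter_mset (\<lambda>x. rp x = r) Y), {#}, Rp)"
| add: "\<lbrakk> sel_reach Rp rp nv Fi Y \<mu> (\<rho>, Ft, R'); size Y + size Ft < \<mu>;
          r \<in> R'; \<forall>r'\<in>R'. \<rho> r \<le> \<rho> r';
          x \<in># Fi - Ft; rp x = r;
          \<forall>x'\<in># Fi - Ft. rp x' = r \<longrightarrow> dist (nv x) r \<le> dist (nv x') r \<rbrakk>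
        \<Longrightarrow> sel_reach Rp rp nv Fi Y \<mu> (\<rho>(r := \<rho> r + 1), Ft + {#x#}, R')"
| remove: "\<lbrakk> sel_reach Rp rp nv Fi Y \<mu> (\<rho>, Ft, R'); size Y + size Ft < \<mu>;
          r \<in> R'; \<forall>r'\<in>R'. \<rho> r \<le> \<rho> r';
          \<not> (\<exists>x\<in># Fi - Ft. rp x = r) \<rbrakk>
        \<Longrightarrow> sel_reach Rp rp nv Fi Y \<mu> (\<rho>, Ft, R' - {r})"

definition sel_outcome :: "(real^'m::finite) set \<Rightarrow> (bool list \<Rightarrow> real^'m) \<Rightarrow> (bool list \<Rightarrow> real^'m) \<Rightarrow>
    bool list multiset \<Rightarrow> bool list multiset \<Rightarrow> nat \<Rightarrow> bool list multiset \<Rightarrow> bool" where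
  "sel_outcome Rp rp nv Fi Y \<mu> P' \<longleftrightarrow>
     (\<exists>\<rho> Ft R'. sel_reach Rp rp nv Fi Y \<mu> (\<rho>, Ft, R') \<and> size Y + size Ft = \<mu> \<and> P' = Y + Ft)"

definition gen_step :: "(bool list \<Rightarrow> 'm::finite \<Rightarrow> nat) \<Rightarrow> nat \<Rightarrow> nat \<Rightarrow> real \<Rightarrow> nat \<Rightarrow>
    (real^'m \<Rightarrow> real^'m) \<Rightarrow> ('m \<Rightarrow> real) \<Rightarrow> ('m \<Rightarrow> real) \<Rightarrow> (real^'m) option set \<Rightarrow>
    bool list multiset \<Rightarrow> bool list multiset \<Rightarrow> ('m \<Rightarrow> (real^'m) option) \<Rightarrow>
    bool list multiset \<Rightarrow> bool" where
  "gen_step f n \<mu> eps p A ymin ymax Eprev P Q e P' \<longleftrightarrow>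
     offspring_ok n \<mu> P Q \<and>
     (let R = P + Q; k = istar f R \<mu>; Y = R - rest f R k; Fi = front f R k;
          F1 = front f R 0;
          ynad = nadir f eps ymin ymax e F1 R;
          nv = normf f ymin ynad;
          rp = (\<lambda>x. A (nv x))
      in (\<forall>j. e j \<in> Some ` fvec f ` set_mset (Y + Fi) \<union> Eprev) \<and>
         sel_outcome (refset p) rp nv Fi Y \<mu> P')"

definition ymin_run :: "(bool list \<Rightarrow> 'm \<Rightarrow> nat) \<Rightarrow> (nat \<Rightarrow> bool list multiset) \<Rightarrow>
    (nat \<Rightarrow> bool list multiset) \<Rightarrow> nat \<Rightarrow> 'm \<Rightarrow> real" where
  "ymin_run f P Q t j = real (Min {f x j | x s. s \<le> t \<and> x \<in># P s + Q s})"

definition ymax_run :: "(bool list \<Rightarrow> 'm \<Rightarrow> nat) \<Rightarrow> (nat \<Rightarrow> bool list multiset) \<Rightarrow>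
    (nat \<Rightarrow> bool list multiset) \<Rightarrow> nat \<Rightarrow> 'm \<Rightarrow> real" where
  "ymax_run f P Q t j = real (Max {f x j | x s. s \<le> t \<and> x \<in># front f (P s + Q s) 0})"

fun Eset :: "(nat \<Rightarrow> 'm \<Rightarrow> (real^'m::finite) option) \<Rightarrow> nat \<Rightarrow> (real^'m) option set" where
  "Eset e 0 = {None}"
| "Eset e (Suc t) = range (e t)"

text \<open>A possible run of NSGA-III: P t are the populations, Q t the offspring,
  e t the extreme points chosen in generation t.\<close>
definition nsga3_run :: "(bool list \<Rightarrow> 'm::finite \<Rightarrow> nat) \<Rightarrow> nat \<Rightarrow> nat \<Rightarrow> real \<Rightarrow> nat \<Rightarrow>
    (real^'m \<Rightarrow> real^'m) \<Rightarrow> (nat \<Rightarrow> bool list multiset) \<Rightarrow> (nat \<Rightarrow> bool list multiset) \<Rightarrow>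
    (nat \<Rightarrow> 'm \<Rightarrow> (real^'m) option) \<Rightarrow> bool" where
  "nsga3_run f n \<mu> eps p A P Q e \<longleftrightarrow>
     size (P 0) = \<mu> \<and> set_mset (P 0) \<subseteq> {x. length x = n} \<and>
     (\<forall>t. gen_step f n \<mu> eps p A (ymin_run f P Q t) (ymax_run f P Q t) (Eset e t)
            (P t) (Q t) (e t) (P (Suc t)))"

end

theory Submission
  imports Defs
begin

text \<open>Points of the first front have pairwise incomparable objective vectors, so there are at
  most \<open>|S| \<le> \<mu>\<close> distinct ones. After normalization every objective lies in \<open>[0, 1]\<close> and
  distinct integer values differ by at least \<open>1/f\<^sub>m\<^sub>a\<^sub>x\<close>. Every point of the unit cube is within
  \<open>m\<^sup>3\<^sup>/\<^sup>2/p \<le> 1/(2 f\<^sub>m\<^sub>a\<^sub>x)\<close> of the line through some reference point, so two incomparable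
  points, each better than the other in some coordinate by \<open>1/f\<^sub>m\<^sub>a\<^sub>x\<close>, cannot share a reference
  point. Hence the first front occupies at most \<open>\<mu>\<close> reference points, one point per objective
  vector. If the first front is the critical layer, niching starts with all counts zero and
  therefore visits every occupied reference point before any count reaches two; otherwise the
  whole first front survives.\<close>

lemma exists_int_rounding:
  fixes w :: "'a \<Rightarrow> real"
  assumes "finite K" "\<forall>k\<in>K. w k \<ge> 0"
  shows "\<exists>a::'a \<Rightarrow> int. (\<Sum>k\<in>K. a k) = \<lfloor>\<Sum>k\<in>K. w k\<rfloor> \<and>
           (\<forall>k\<in>K. a k \<ge> 0 \<and> \<bar>real_of_int (a k) - w k\<bar> < 1)"
  using assms
proof (induction K rule: finite_induct)
  case empty
  then show ?case by simp
next
  case (insert k K)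
  then obtain a where a: "(\<Sum>k\<in>K. a k) = \<lfloor>\<Sum>k\<in>K. w k\<rfloor>"
      "\<forall>k\<in>K. a k \<ge> 0 \<and> \<bar>real_of_int (a k) - w k\<bar> < 1"
    by auto
  define W where "W = (\<Sum>k\<in>K. w k)"
  \<comment> \<open>round the partial sums, not the summands\<close>
  define a' where "a' = a(k := \<lfloor>W + w k\<rfloor> - \<lfloor>W\<rfloor>)"
  have "(\<Sum>k\<in>K. a' k) = (\<Sum>k\<in>K. a k)"
    unfolding a'_def using insert(2) by (intro sum.cong) auto
  then have sum: "(\<Sum>k\<in>insert k K. a' k) = \<lfloor>\<Sum>k\<in>insert k K. w k\<rfloor>"
    using insert(1,2) a(1) by (simp add: a'_def W_def add.commute)
  have "\<bar>real_of_int (a' k) - w k\<bar> < 1"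
    unfolding a'_def abs_less_iff using floor_correct[of "W + w k"] floor_correct[of W] by simp linarith
  moreover have "a' k \<ge> 0"
    unfolding a'_def using insert(4) by (simp add: floor_mono)
  ultimately show ?case
    using sum a(2) insert(2) by (auto simp: a'_def)
qed

lemma norm_less_sqrt_card_mult:
  fixes x :: "real^'m::finite"
  assumes "\<forall>k. \<bar>x$k\<bar> < c"
  shows "norm x < sqrt (real CARD('m)) * c"
proof -
  have c: "c > 0" using assms abs_ge_zero order.strict_trans1 by blast
  have "(\<Sum>i\<in>UNIV. (norm (x$i))\<^sup>2) < (\<Sum>i\<in>(UNIV::'m set). c\<^sup>2)"
  proof (intro sum_strict_mono)
    fix i
    show "(norm (x$i))\<^sup>2 < c\<^sup>2"
      using assms power_strict_mono[of "\<bar>x$i\<bar>" c 2] by simp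
  qed auto
  then have "norm x < sqrt (real CARD('m) * c\<^sup>2)"
    unfolding norm_vec_def L2_set_def by (simp add: real_sqrt_less_mono)
  also have "\<dots> = sqrt (real CARD('m)) * c" using c by (simp add: real_sqrt_mult)
  finally show ?thesis .
qed

lemma refset_nonneg: "r \<in> refset p \<Longrightarrow> r$k \<ge> 0"
  unfolding refset_def by (auto intro!: divide_nonneg_nonneg sum_nonneg)

lemma refset_line_close:
  fixes u :: "real^'m::finite"
  assumes p: "p > 0" and u: "\<forall>k. 0 \<le> u$k \<and> u$k \<le> 1"
  shows "\<exists>r\<in>refset p. infdist u (span {r}) < real CARD('m) * sqrt (real CARD('m)) / real p"
proof -
  define m where "m = real CARD('m)"
  have m: "m > 0" unfolding m_def by simp
  define s where "s = (\<Sum>k\<in>UNIV. u$k)"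
  have s: "0 \<le> s" "s \<le> m"
    unfolding s_def m_def using u sum_mono[of UNIV "\<lambda>k. u$k" "\<lambda>k. 1"] by (auto intro: sum_nonneg)
  \<comment> \<open>the point \<open>u\<close> rescaled onto the simplex of coordinate sum \<open>p\<close>\<close>
  define w where "w k = (if s = 0 then real p / m else real p * u$k / s)" for k
  have w: "\<forall>k\<in>UNIV. w k \<ge> 0" unfolding w_def using u s m by auto
  have "(\<Sum>k\<in>UNIV. w k) = real p"
    using m by (cases "s = 0") (auto simp: w_def m_def s_def sum_divide_distrib[symmetric] sum_distrib_left[symmetric])
  then obtain a :: "'m \<Rightarrow> int" where a: "(\<Sum>k\<in>UNIV. a k) = int p"
      "\<forall>k. a k \<ge> 0 \<and> \<bar>real_of_int (a k) - w k\<bar> < 1"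
    using exists_int_rounding[of UNIV w] w by auto
  have "int (\<Sum>k\<in>UNIV. nat (a k)) = (\<Sum>k\<in>UNIV. a k)"
    unfolding of_nat_sum using a(2) by simp
  then have "(\<Sum>k\<in>UNIV. nat (a k)) = p" using a(1) by linarith
  then have r: "(\<chi> i. real (nat (a i)) / real p) \<in> refset p" (is "?r \<in> _")
    unfolding refset_def by (auto intro!: exI[of _ "\<lambda>i. nat (a i)"])
  show ?thesis
  proof (cases "s = 0")
    case True
    then have "u = 0"
      using u sum_nonneg_eq_0_iff[of UNIV "\<lambda>k. u$k"] unfolding s_def by (auto simp: vec_eq_iff)
    then show ?thesis using r p by (intro bexI[of _ ?r]) (auto simp: span_zero)
  next
    case False
    have comp: "\<bar>(u - s *\<^sub>R ?r)$k\<bar> < s / real p" for k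
    proof -
      have "\<bar>(u - s *\<^sub>R ?r)$k\<bar> = (s / real p) * \<bar>w k - real_of_int (a k)\<bar>"
        using False s p a(2) by (simp add: w_def field_simps abs_mult)
      also have "\<dots> < (s / real p) * 1"
        using a(2) False s p by (intro mult_strict_left_mono) (auto simp: abs_minus_commute)
      finally show ?thesis by simp
    qed
    have "infdist u (span {?r}) \<le> dist u (s *\<^sub>R ?r)"
      by (intro infdist_le) (simp add: span_base span_mul)
    also have "\<dots> < sqrt m * (s / real p)"
      unfolding dist_norm m_def by (rule norm_less_sqrt_card_mult) (use comp in auto)
    also have "\<dots> \<le> sqrt m * (m / real p)"
      using s p by (intro mult_left_mono divide_right_mono) auto
    finally show ?thesis using r unfolding m_def by (auto simp: mult.commute)
  qed
qed

lemma assoc_rule_componentwise_close: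
  fixes u :: "real^'m::finite"
  assumes "p > 0" "\<forall>k. 0 \<le> u$k \<and> u$k \<le> 1" "assoc_rule p A"
  shows "\<exists>c. \<forall>k. \<bar>u$k - c * A u $ k\<bar> < real CARD('m) * sqrt (real CARD('m)) / real p"
proof -
  let ?\<delta> = "real CARD('m) * sqrt (real CARD('m)) / real p"
  obtain r where "r \<in> refset p" "infdist u (span {r}) < ?\<delta>"
    using refset_line_close[OF assms(1,2)] by blast
  with assms(3) have close: "infdist u (span {A u}) < ?\<delta>"
    unfolding assoc_rule_def by (meson order.strict_trans1)
  obtain x where x: "x \<in> span {A u}" "infdist u (span {A u}) = dist u x"
    using infdist_attains_inf[of "span {A u}" u] span_zero[of "{A u}"] by blast
  obtain c where c: "x = c *\<^sub>R A u" using x(1) unfolding span_singleton by auto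
  have "\<bar>u$k - c * A u $ k\<bar> < ?\<delta>" for k
    using component_le_norm_cart[of "u - x" k] close x(2) c by (simp add: dist_norm)
  then show ?thesis by blast
qed

lemma close_to_same_ray_gap:
  fixes u v r :: "real^'m::finite"
  assumes "\<forall>k. \<bar>u$k - c * r$k\<bar> < \<delta>" "\<forall>k. \<bar>v$k - d * r$k\<bar> < \<delta>" "r$i \<ge> 0" "c \<le> d"
  shows "u$i - v$i < 2 * \<delta>"
proof -
  have "c * r$i \<le> d * r$i" using assms(3,4) by (simp add: mult_right_mono)
  moreover have "u$i - c * r$i < \<delta>" "d * r$i - v$i < \<delta>"
    using assms(1,2) unfolding abs_less_iff by (blast, fastforce)
  ultimately show ?thesis by linarith
qed

lemma assoc_rule_separates:
  fixes u v :: "real^'m::finite" and F :: real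
  assumes F: "F \<ge> 1" and p: "real p \<ge> 2 * real CARD('m) powr (3/2) * F"
    and u: "\<forall>k. 0 \<le> u$k \<and> u$k \<le> 1" and v: "\<forall>k. 0 \<le> v$k \<and> v$k \<le> 1"
    and gap: "u$i - v$i \<ge> 1/F" "v$j - u$j \<ge> 1/F"
    and A: "assoc_rule p A"
  shows "A u \<noteq> A v"
proof
  assume eq: "A u = A v"
  define m where "m = real CARD('m)"
  have m: "m \<ge> 1" unfolding m_def by simp
  have "m powr (3/2) = m * m powr (1/2)"
    using m powr_add[of m 1 "1/2"] by simp
  then have pw: "real CARD('m) powr (3/2) = m * sqrt m"
    using m by (simp add: powr_half_sqrt m_def)
  have "m * sqrt m \<ge> 1" using m mult_mono[of 1 m 1 "sqrt m"] by simp
  then have p0: "real p > 0" and \<delta>: "2 * (m * sqrt m / real p) \<le> 1 / F"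
    using p F pw mult_mono[of 1 "m * sqrt m" 1 F] by (auto simp: field_simps)
  obtain c where c: "\<forall>k. \<bar>u$k - c * A u $ k\<bar> < m * sqrt m / real p"
    using assoc_rule_componentwise_close[OF _ u A] p0 unfolding m_def by auto
  obtain d where d: "\<forall>k. \<bar>v$k - d * A u $ k\<bar> < m * sqrt m / real p"
    using assoc_rule_componentwise_close[OF _ v A] p0 eq unfolding m_def by auto
  have "A u \<in> refset p" using A unfolding assoc_rule_def by blast
  then have nonneg: "A u $ k \<ge> 0" for k by (rule refset_nonneg)
  show False
  proof (cases "c \<le> d")
    case True
    show False using close_to_same_ray_gap[OF c d nonneg[of i] True] gap(1) \<delta> by linarith
  next
    case False
    show False using close_to_same_ray_gap[OF d c nonneg[of j]] False gap(2) \<delta> by linarith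
  qed
qed

lemma mem_nd_iff: "z \<in># nd f R \<longleftrightarrow> z \<in># R \<and> \<not> (\<exists>y\<in>#R. sdom f y z)"
  unfolding nd_def by auto

lemma nd_subset: "nd f R \<subseteq># R"
  unfolding nd_def by (rule multiset_filter_subset)

lemma nd_not_wdom:
  assumes "z \<in># nd f R" "z' \<in># nd f R" "f z \<noteq> f z'"
  shows "\<not> wdom f z z'"
proof
  assume w: "wdom f z z'"
  obtain j where "f z j \<noteq> f z' j" using assms(3) by auto
  moreover have "f z' j \<le> f z j" using w unfolding wdom_def by blast
  ultimately have "f z' j < f z j" by linarith
  with w have "sdom f z z'" unfolding sdom_def by blast
  then show False using assms(1,2) unfolding mem_nd_iff by blast
qed

lemma rest_antimono: "k \<le> l \<Longrightarrow> rest f R l \<subseteq># rest f R k"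
  by (induction l rule: dec_induct) (auto intro: subset_mset.order_trans[OF diff_subset_eq_self])

lemma nd_subset_diff_rest:
  assumes "k \<ge> 1"
  shows "nd f R \<subseteq># R - rest f R k"
proof -
  have "rest f R k \<subseteq># R - nd f R"
    using rest_antimono[OF assms, of f R] by (simp add: front_def)
  then show ?thesis using nd_subset[of f R] unfolding subseteq_mset_def
    by (metis count_diff diff_diff_cancel diff_le_mono2)
qed

lemma card_objectives_nd_le:
  assumes S: "max_incomparable_set f n S" and len: "\<forall>y\<in>#R. length y = n"
  shows "card (f ` set_mset (nd f R)) \<le> card S"
proof -
  let ?X = "set_mset (nd f R)"
  \<comment> \<open>one representative per objective vector\<close>
  define T where "T = inv_into ?X f ` f ` ?X"
  have card_T: "card T = card (f ` ?X)"
    unfolding T_def by (intro card_image inj_on_inv_into) simp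
  have T_sub: "T \<subseteq> ?X" unfolding T_def by (auto intro: inv_into_into)
  have "T \<subseteq> {x. length x = n}" using T_sub len nd_subset[of f R] by (auto dest: mset_subset_eqD)
  moreover have "mutually_incomparable f T"
    unfolding mutually_incomparable_def incomparable_def
  proof (intro ballI impI)
    fix z y assume "z \<in> T" "y \<in> T" "z \<noteq> y"
    then have "f z \<noteq> f y" unfolding T_def by (auto simp: f_inv_into_f)
    then show "\<not> wdom f z y \<and> \<not> wdom f y z"
      using \<open>z \<in> T\<close> \<open>y \<in> T\<close> T_sub nd_not_wdom by (metis subsetD)
  qed
  ultimately have "card T \<le> card S" using S unfolding max_incomparable_set_def by blast
  then show ?thesis using card_T by simp
qed

lemma card_assoc_nd_le:
  assumes "max_incomparable_set f n S" "\<forall>y\<in>#R. length y = n"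
  shows "card ((\<lambda>x. A (normf f ymin ynad x)) ` set_mset (nd f R)) \<le> card S"
proof -
  have "(\<lambda>x. A (normf f ymin ynad x)) = (\<lambda>\<phi>. A (\<chi> j. (real (\<phi> j) - ymin j) / (ynad j - ymin j))) \<circ> f"
    by (rule ext) (simp add: normf_def)
  then have "card ((\<lambda>x. A (normf f ymin ynad x)) ` set_mset (nd f R)) \<le> card (f ` set_mset (nd f R))"
    by (simp only: image_comp[symmetric] card_image_le finite_imageI finite_set_mset)
  also have "\<dots> \<le> card S" by (rule card_objectives_nd_le[OF assms])
  finally show ?thesis .
qed

lemma sel_reach_subset:
  assumes "sel_reach Rp rp nv Fi Y \<mu> (\<rho>, Ft, R')"
  shows "Ft \<subseteq># Fi"
  using assms
  by (induction "(\<rho>, Ft, R')" arbitrary: \<rho> Ft R' rule: sel_reach.induct)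
     (auto simp: subseteq_mset_def in_diff_count)

lemma size_le_card_image_if_fibres_le_1:
  assumes "\<forall>r. size (filter_mset (\<lambda>z. g z = r) M) \<le> 1"
  shows "size M \<le> card (g ` set_mset M)"
  using assms
proof (induction M)
  case empty
  then show ?case by simp
next
  case (add x M)
  have "size (filter_mset (\<lambda>z. g z = r) M) \<le> size (filter_mset (\<lambda>z. g z = r) (add_mset x M))" for r
    by simp
  with add.prems have "size M \<le> card (g ` set_mset M)" using add.IH le_trans by blast
  moreover have "g x \<notin> g ` set_mset M"
  proof
    assume "g x \<in> g ` set_mset M"
    then have "filter_mset (\<lambda>z. g z = g x) M \<noteq> {#}" by (auto simp: filter_mset_eq_mempty_iff)
    then have "size (filter_mset (\<lambda>z. g z = g x) (add_mset x M)) \<ge> 2"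
      by (cases "filter_mset (\<lambda>z. g z = g x) M") auto
    then show False using add.prems[rule_format, of "g x"] by linarith
  qed
  ultimately show ?case by simp
qed

text \<open>While some point of \<open>Fi\<close> is associated with a reference point of count zero, no
  count exceeds one: the niche of that point is never removed, so it is always among the
  candidates of minimal count.\<close>
lemma sel_reach_invariant:
  assumes "sel_reach Rp rp nv Fi {#} \<mu> (\<rho>, Ft, R')" "x \<in># Fi" "rp x \<in> Rp"
  shows "(\<forall>r. \<rho> r = size (filter_mset (\<lambda>z. rp z = r) Ft)) \<and>
     (\<forall>r\<in>Rp - R'. \<not> (\<exists>z\<in>#Fi - Ft. rp z = r)) \<and>
     (\<rho> (rp x) = 0 \<longrightarrow> (\<forall>r. \<rho> r \<le> 1))"
  using assms
proof (induction "(\<rho>, Ft, R')" arbitrary: \<rho> Ft R' rule: sel_reach.induct)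
  case init
  then show ?case by simp
next
  case (add \<rho> Ft R' r y)
  note IH = add.hyps(2)[OF add.prems]
  have "z \<in># Fi - Ft" if "z \<in># Fi - (Ft + {#y#})" for z
    using that by (auto simp: in_diff_count split: if_splits)
  then have "\<forall>r'\<in>Rp - R'. \<not> (\<exists>z\<in>#Fi - (Ft + {#y#}). rp z = r')"
    using IH by blast
  moreover have "\<forall>r'. (\<rho>(r := \<rho> r + 1)) r' \<le> 1" if zero: "(\<rho>(r := \<rho> r + 1)) (rp x) = 0"
  proof -
    from zero have rho: "\<rho> (rp x) = 0" "r \<noteq> rp x" by (auto split: if_splits)
    then have "x \<notin># Ft" using IH by (auto simp: filter_mset_eq_mempty_iff)
    then have "x \<in># Fi - Ft" using add.prems(1) by (simp add: in_diff_count not_in_iff)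
    then have "rp x \<in> R'" using IH add.prems(2) by blast
    then have "\<rho> r = 0" using \<open>\<forall>r'\<in>R'. \<rho> r \<le> \<rho> r'\<close> rho by fastforce
    then show ?thesis using IH rho by auto
  qed
  ultimately show ?case using IH \<open>rp y = r\<close> by auto
next
  case (remove \<rho> Ft R' r)
  then show ?case by blast
qed

lemma sel_reach_covers_occupied:
  assumes "sel_reach Rp rp nv Fi {#} \<mu> (\<rho>, Ft, R')" "size Ft = \<mu>" "x \<in># Fi" "rp x \<in> Rp"
    "card (rp ` set_mset Fi) \<le> \<mu>"
  shows "\<exists>x'\<in>#Ft. rp x' = rp x"
proof (rule ccontr)
  assume none: "\<not> (\<exists>x'\<in>#Ft. rp x' = rp x)"
  have inv: "\<forall>r. \<rho> r = size (filter_mset (\<lambda>z. rp z = r) Ft)" "\<rho> (rp x) = 0 \<longrightarrow> (\<forall>r. \<rho> r \<le> 1)"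
    using sel_reach_invariant[OF assms(1,3,4)] by blast+
  have "\<rho> (rp x) = 0" using none inv(1) by (simp add: filter_mset_eq_mempty_iff)
  then have "size Ft \<le> card (rp ` set_mset Ft)"
    using inv by (intro size_le_card_image_if_fibres_le_1) metis
  also have "\<dots> \<le> card (rp ` set_mset Fi - {rp x})"
    using none sel_reach_subset[OF assms(1)] by (intro card_mono) (auto dest: mset_subset_eqD)
  also have "\<dots> < card (rp ` set_mset Fi)"
    using assms(3) by (intro psubset_card_mono) auto
  finally show False using assms(2,5) by linarith
qed

definition normalization_bounded ::
    "('a \<Rightarrow> 'm \<Rightarrow> nat) \<Rightarrow> ('m \<Rightarrow> real) \<Rightarrow> ('m \<Rightarrow> real) \<Rightarrow> real \<Rightarrow> 'a multiset \<Rightarrow> bool" where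
  "normalization_bounded f ymin ynad F R \<longleftrightarrow>
     (\<forall>y\<in>#R. \<forall>j. ymin j \<le> real (f y j) \<and> real (f y j) \<le> ynad j \<and> ynad j - ymin j \<le> F)"

lemma normf_component_bounds:
  assumes "ymin j \<le> real (f y j)" "real (f y j) \<le> ynad j"
  shows "0 \<le> normf f ymin ynad y $ j \<and> normf f ymin ynad y $ j \<le> 1"
  using assms by (cases "ynad j = ymin j") (auto simp: normf_def divide_le_eq_1)

lemma normf_component_gap:
  assumes "ymin j \<le> real (f y j)" "real (f z j) \<le> ynad j" "ynad j - ymin j \<le> F" "f y j < f z j"
  shows "1 / F \<le> normf f ymin ynad z $ j - normf f ymin ynad y $ j"
proof -
  have lt: "real (f y j) + 1 \<le> real (f z j)" using assms(4) by simp
  then have D: "ynad j - ymin j > 0" using assms(1,2) by linarith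
  have "1 / F \<le> 1 / (ynad j - ymin j)" using D assms(3) by (intro divide_left_mono) auto
  also have "\<dots> \<le> (real (f z j) - real (f y j)) / (ynad j - ymin j)"
    using lt D by (intro divide_right_mono) auto
  also have "\<dots> = normf f ymin ynad z $ j - normf f ymin ynad y $ j"
    by (simp add: normf_def diff_divide_distrib)
  finally show ?thesis .
qed

lemma nd_same_assoc_same_objectives:
  fixes f :: "bool list \<Rightarrow> 'm::finite \<Rightarrow> nat"
  assumes F: "F \<ge> 1" and p: "real p \<ge> 2 * real CARD('m) powr (3/2) * F" and A: "assoc_rule p A"
    and bounds: "normalization_bounded f ymin ynad F R"
    and z: "z \<in># nd f R" and y: "y \<in># nd f R"
    and same: "A (normf f ymin ynad z) = A (normf f ymin ynad y)"
  shows "f z = f y"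
proof (rule ccontr)
  assume ne: "f z \<noteq> f y"
  obtain i where i: "f z i < f y i"
    using nd_not_wdom[OF z y ne] unfolding wdom_def not_all not_le ..
  obtain j where j: "f y j < f z j"
    using nd_not_wdom[OF y z ne[symmetric]] unfolding wdom_def not_all not_le ..
  have zR: "z \<in># R" and yR: "y \<in># R" using z y by (simp_all add: mem_nd_iff)
  have unit: "\<forall>k. 0 \<le> normf f ymin ynad w $ k \<and> normf f ymin ynad w $ k \<le> 1" if "w \<in># R" for w
  proof
    fix k
    have "ymin k \<le> real (f w k)" "real (f w k) \<le> ynad k"
      using bounds that unfolding normalization_bounded_def by blast+
    then show "0 \<le> normf f ymin ynad w $ k \<and> normf f ymin ynad w $ k \<le> 1"
      by (rule normf_component_bounds)
  qed
  have gap: "1 / F \<le> normf f ymin ynad w' $ k - normf f ymin ynad w $ k"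
    if "w \<in># R" "w' \<in># R" "f w k < f w' k" for w w' k
  proof -
    have "ymin k \<le> real (f w k)" "real (f w' k) \<le> ynad k" "ynad k - ymin k \<le> F"
      using bounds that(1,2) unfolding normalization_bounded_def by blast+
    then show ?thesis using that(3) by (rule normf_component_gap)
  qed
  have "A (normf f ymin ynad y) \<noteq> A (normf f ymin ynad z)"
    using assoc_rule_separates[OF F p unit[OF yR] unit[OF zR] gap[OF zR yR i] gap[OF yR zR j] A] .
  then show False using same by simp
qed

lemma nadir_bounds:
  assumes f: "\<forall>y\<in>#R. f y j \<le> F" and N: "N \<subseteq># R" "N \<noteq> {#}"
    and ymin: "0 \<le> ymin j" and ymax: "ymax j \<le> real F" and eps: "real F \<le> eps"
  shows "\<forall>y\<in>#R. real (f y j) \<le> nadir f eps ymin ymax e N R j"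
    and "nadir f eps ymin ymax e N R j - ymin j \<le> real F"
proof -
  have R: "R \<noteq> {#}" using N by auto
  have Max_R: "Max ((\<lambda>x. f x j) ` set_mset R) \<le> F"
    using f R by (subst Max_le_iff) auto
  have "Max ((\<lambda>x. f x j) ` set_mset N) \<le> F"
    using f N by (subst Max_le_iff) (auto dest: mset_subset_eqD)
  moreover have "nadir0 f eps ymax e N j \<le> ymax j" if "hyp_ok eps ymax e"
    using that unfolding nadir0_def hyp_ok_def by simp
  ultimately have nadir0: "nadir0 f eps ymax e N j \<le> real F"
    using ymax unfolding nadir0_def by (cases "hyp_ok eps ymax e") auto
  show "\<forall>y\<in>#R. real (f y j) \<le> nadir f eps ymin ymax e N R j"
    using f ymin eps unfolding nadir_def by (auto simp: Max_ge_iff)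
  show "nadir f eps ymin ymax e N R j - ymin j \<le> real F"
    using Max_R nadir0 ymin unfolding nadir_def by auto
qed

lemma mutate_length: "y \<in> set_pmf (mutate n x) \<Longrightarrow> length y = length x"
  by (induction x arbitrary: y) auto

lemma gen_step_subset:
  assumes "gen_step f n \<mu> eps p A ymin ymax E P Q e P'"
  shows "set_mset P' \<subseteq> set_mset (P + Q)"
proof -
  define k where "k = istar f (P + Q) \<mu>"
  define nv where "nv = normf f ymin (nadir f eps ymin ymax e (front f (P + Q) 0) (P + Q))"
  obtain \<rho> Ft R'
    where Ft: "sel_reach (refset p) (\<lambda>x. A (nv x)) nv (front f (P + Q) k) (P + Q - rest f (P + Q) k) \<mu> (\<rho>, Ft, R')"
      and P': "P' = (P + Q - rest f (P + Q) k) + Ft"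
    using assms unfolding gen_step_def sel_outcome_def Let_def k_def nv_def by blast
  have "Ft \<subseteq># P + Q"
    using sel_reach_subset[OF Ft] nd_subset rest_antimono[of 0 k f "P + Q"]
    by (metis front_def rest.simps(1) subset_mset.order_trans zero_le)
  then show ?thesis unfolding P' by (auto dest: mset_subset_eqD in_diffD)
qed

lemma nsga3_run_lengths:
  assumes "nsga3_run f n \<mu> eps p A P Q e"
  shows "\<forall>y\<in>#P t + Q t. length y = n"
proof -
  have step: "gen_step f n \<mu> eps p A (ymin_run f P Q t) (ymax_run f P Q t) (Eset e t)
      (P t) (Q t) (e t) (P (Suc t))" for t
    using assms unfolding nsga3_run_def by blast
  have offspring: "\<forall>y\<in>#Q t. length y = n" if "\<forall>y\<in>#P t. length y = n" for t
    using step[of t] that mutate_length unfolding gen_step_def offspring_ok_def by fastforce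
  have "\<forall>y\<in>#P t. length y = n"
  proof (induction t)
    case 0
    then show ?case using assms unfolding nsga3_run_def by auto
  next
    case (Suc t)
    then show ?case using gen_step_subset[OF step[of t]] offspring[of t] by auto
  qed
  then show ?thesis using offspring by auto
qed

lemma fmax_ge:
  fixes f :: "bool list \<Rightarrow> 'm::finite \<Rightarrow> nat"
  assumes "length x = n"
  shows "f x j \<le> fmax f n"
proof -
  have "{f x j | x j. length x = n} \<subseteq> (\<lambda>(x, j). f x j) ` ({x. length x = n} \<times> UNIV)" by auto
  moreover have "finite ((\<lambda>(x, j). f x j) ` ({x :: bool list. length x = n} \<times> (UNIV :: 'm set)))"
    using finite_lists_length_eq[of "UNIV :: bool set" n] by simp
  ultimately have "finite {f x j | x j. length x = n}" by (rule finite_subset)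
  then show ?thesis unfolding fmax_def using assms by (intro Max_ge) auto
qed

lemma finite_values_upto: "finite {g x | x s. s \<le> (t :: nat) \<and> x \<in># M s}"
proof -
  have "{g x | x s. s \<le> t \<and> x \<in># M s} = g ` (\<Union>s\<le>t. set_mset (M s))" by blast
  moreover have "finite (\<Union>s\<le>t. set_mset (M s))" by simp
  ultimately show ?thesis by simp
qed

lemma nsga3_run_normalization_bounds:
  fixes f :: "bool list \<Rightarrow> 'm::finite \<Rightarrow> nat"
  assumes run: "nsga3_run f n \<mu> eps p A P Q e" and eps: "real (fmax f n) \<le> eps"
    and x: "x \<in># front f (P t + Q t) 0"
  shows "normalization_bounded f (ymin_run f P Q t)
           (nadir f eps (ymin_run f P Q t) (ymax_run f P Q t) (e t) (front f (P t + Q t) 0) (P t + Q t))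
           (fmax f n) (P t + Q t)"
  unfolding normalization_bounded_def
proof (intro ballI allI conjI)
  fix y j assume y: "y \<in># P t + Q t"
  have len: "\<forall>y\<in>#P s + Q s. length y = n" for s using nsga3_run_lengths[OF run] .
  have F1: "front f (P t + Q t) 0 \<subseteq># P t + Q t" unfolding front_def by (simp add: nd_subset)
  show "ymin_run f P Q t j \<le> real (f y j)"
    unfolding ymin_run_def of_nat_le_iff using y by (intro Min_le[OF finite_values_upto]) blast
  have ymax: "ymax_run f P Q t j \<le> real (fmax f n)"
    unfolding ymax_run_def of_nat_le_iff
  proof (rule Max.boundedI[OF finite_values_upto])
    show "{f x j | x s. s \<le> t \<and> x \<in># front f (P s + Q s) 0} \<noteq> {}" using x by blast
  next
    fix v assume "v \<in> {f x j | x s. s \<le> t \<and> x \<in># front f (P s + Q s) 0}"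
    then obtain z s where "v = f z j" "z \<in># nd f (P s + Q s)" by (auto simp: front_def)
    then show "v \<le> fmax f n" using len[of s] mset_subset_eqD[OF nd_subset] fmax_ge by metis
  qed
  have "\<forall>y\<in>#P t + Q t. f y j \<le> fmax f n" using len fmax_ge by blast
  moreover have "front f (P t + Q t) 0 \<noteq> {#}" using x by auto
  moreover have "0 \<le> ymin_run f P Q t j" unfolding ymin_run_def by simp
  ultimately show
    "real (f y j) \<le> nadir f eps (ymin_run f P Q t) (ymax_run f P Q t) (e t) (front f (P t + Q t) 0) (P t + Q t) j"
    "nadir f eps (ymin_run f P Q t) (ymax_run f P Q t) (e t) (front f (P t + Q t) 0) (P t + Q t) j
       - ymin_run f P Q t j \<le> real (fmax f n)"
    using nadir_bounds[where R = "P t + Q t" and N = "front f (P t + Q t) 0"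
        and ymin = "ymin_run f P Q t" and ymax = "ymax_run f P Q t" and e = "e t" and j = j] F1 ymax eps y
    by blast+
qed

lemma gen_step_keeps_first_front:
  fixes f :: "bool list \<Rightarrow> 'm::finite \<Rightarrow> nat"
  assumes step: "gen_step f n \<mu> eps p A ymin ymax E P Q e P'"
    and F: "F \<ge> 1" and p: "real p \<ge> 2 * real CARD('m) powr (3/2) * F" and A: "assoc_rule p A"
    and S: "max_incomparable_set f n S" "card S \<le> \<mu>"
    and len: "\<forall>y\<in>#P + Q. length y = n"
    and bounds: "normalization_bounded f ymin (nadir f eps ymin ymax e (front f (P + Q) 0) (P + Q)) F (P + Q)"
    and x: "x \<in># front f (P + Q) 0"
  shows "\<exists>x'\<in>#P'. f x' = f x"
proof -
  define R where "R = P + Q"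
  define k where "k = istar f R \<mu>"
  define ynad where "ynad = nadir f eps ymin ymax e (front f R 0) R"
  define rp where "rp = (\<lambda>x. A (normf f ymin ynad x))"
  have "sel_outcome (refset p) rp (normf f ymin ynad) (front f R k) (R - rest f R k) \<mu> P'"
    using step unfolding gen_step_def Let_def R_def k_def ynad_def rp_def by blast
  then obtain \<rho> Ft R' where sel: "sel_reach (refset p) rp (normf f ymin ynad) (front f R k) (R - rest f R k) \<mu> (\<rho>, Ft, R')"
    and size: "size (R - rest f R k) + size Ft = \<mu>" and P': "P' = (R - rest f R k) + Ft"
    unfolding sel_outcome_def by blast
  have x: "x \<in># nd f R" using x unfolding R_def front_def by simp
  show ?thesis
  proof (cases "k = 0")
    case False
    then have "x \<in># R - rest f R k" using nd_subset_diff_rest[of k f R] x by (auto dest: mset_subset_eqD)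
    then show ?thesis unfolding P' by auto
  next
    case True
    then have sel: "sel_reach (refset p) rp (normf f ymin ynad) (nd f R) {#} \<mu> (\<rho>, Ft, R')"
      using sel by (simp add: front_def)
    have "card (rp ` set_mset (nd f R)) \<le> card S"
      using card_assoc_nd_le[OF S(1)] len unfolding rp_def R_def by blast
    then have card: "card (rp ` set_mset (nd f R)) \<le> \<mu>" using S(2) by linarith
    have "rp x \<in> refset p" using A unfolding assoc_rule_def rp_def by blast
    moreover have "size Ft = \<mu>" using size True by simp
    ultimately obtain x' where x': "x' \<in># Ft" "rp x' = rp x"
      using sel_reach_covers_occupied[OF sel _ x _ card] by blast
    have "normalization_bounded f ymin ynad F R"
      using bounds unfolding ynad_def R_def .
    moreover have "x' \<in># nd f R" using sel_reach_subset[OF sel] x'(1) by (rule mset_subset_eqD)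
    ultimately have "f x' = f x"
      using nd_same_assoc_same_objectives[OF F p A _ _ x] x'(2) unfolding rp_def by blast
    then show ?thesis unfolding P' using x'(1) by auto
  qed
qed

theorem lemma4:
  fixes f :: "bool list \<Rightarrow> 'm::finite \<Rightarrow> nat"
    and n \<mu> p :: nat and eps :: real
    and A :: "real^'m \<Rightarrow> real^'m"
    and S :: "bool list set"
    and P Q :: "nat \<Rightarrow> bool list multiset"
    and e :: "nat \<Rightarrow> 'm \<Rightarrow> (real^'m) option"
  assumes "fmax f n \<ge> 1"
    and "eps \<ge> real (fmax f n)"
    and "real p \<ge> 2 * real CARD('m) powr (3/2) * real (fmax f n)"
    and "max_incomparable_set f n S"
    and "\<mu> \<ge> card S"
    and "assoc_rule p A"
    and "nsga3_run f n \<mu> eps p A P Q e"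
  shows "\<forall>x\<in># front f (P t + Q t) 0. \<exists>x'\<in># P (Suc t). \<forall>j. f x' j = f x j"
proof
  fix x assume x: "x \<in># front f (P t + Q t) 0"
  have step: "gen_step f n \<mu> eps p A (ymin_run f P Q t) (ymax_run f P Q t) (Eset e t)
      (P t) (Q t) (e t) (P (Suc t))"
    using assms(7) unfolding nsga3_run_def by blast
  have "real (fmax f n) \<ge> 1" using assms(1) by simp
  from gen_step_keeps_first_front[OF step this assms(3,6,4,5) nsga3_run_lengths[OF assms(7)]
      nsga3_run_normalization_bounds[OF assms(7,2) x] x]
  obtain x' where "x' \<in># P (Suc t)" "f x' = f x" by blast
  then show "\<exists>x'\<in># P (Suc t). \<forall>j. f x' j = f x j" by (intro bexI[of _ x']) simp_all
qed

end
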